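(* Let $\{d_{k,j}:k,j\geq 0\}$ be nonnegative numbers such that $D_j(\delta):=\sum_{k\geq 0}d_{k,j}\delta^k\in(0,\infty)$ for all $\delta>0$ and all $j\geq 0$. Let $\{\delta_j(\cdot):j\geq 0\}$ be positive functions on $[0,\infty)$ with $\delta_j(t)\to\infty$ as $t\to\infty$ for every $j$, assume $\sum_{j\geq 0}\frac{d_{j,j}\delta^j}{D_j(\delta)}\in(0,\infty)$ for all $\delta>0$, and let $\{N(t):t\geq 0\}$ be nonnegative integer valued random variables with $$P(N(t)=k)=\frac{\frac{d_{k,k}(\delta_k(t))^k}{D_k(\delta_k(t))}}{\sum_{j\geq 0}\frac{d_{j,j}(\delta_j(t))^j}{D_j(\delta_j(t))}},\quad k\geq 0.$$ Assume the following: (B1) there exists an integer $n\geq 0$ such that for all $j\geq n$, $d_{k,j}=d_k$ for all $k\geq 0$ (so $D_j=D:=\sum_{k\ge0}d_k\delta^k$) and $\delta_j(\cdot)=\delta(\cdot)$ do not depend on $j$; moreover there exist functions $v:(0,\infty)\to(0,\infty)$ with $v(t)\to\infty$ as $t\to\infty$, and a differentiable function $\Delta:(0,\infty)\to\mathbb{R}$, such that $\lim_{t\to\infty}\frac{1}{v(t)}\log D(ut)=\Delta(u)$ for all $u>0$; (B2) the set $\{k\geq 0:d_{k,k}>0\}$ is unbounded; (B3) for all $k\in\{0,1,\ldots,n-1\}$: if $d_k>0$ then $\lim_{t\to\infty}\frac{d_{k,k}(\delta_k(t))^k/D_k(\delta_k(t))}{d_k(\delta(t))^k/D(\delta(t))}=0$,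 and if $d_k=0$ then $d_{k,k}=0$. Let $\Lambda(\theta):=\Delta(e^\theta)-\Delta(1)$, assume that $\Delta''(1)$ exists (so that $\Lambda''(0)$ exists), and assume moreover: (i) whenever $u(t)\to1$ as $t\to\infty$, the function $H_1(t):=\log\frac{D(u(t)\delta(t))}{D(\delta(t))}-v(\delta(t))(\Delta(u(t))-\Delta(1))$ is bounded; (ii) $H_2(t):=\sqrt{v(\delta(t))}\left(\Lambda'(0)-\frac{\delta(t)D'(\delta(t))}{v(\delta(t))D(\delta(t))}\right)$ is bounded; (iii) $H_3(t):=\frac{1}{\sqrt{v(\delta(t))}}\left(\frac{\delta(t)D'(\delta(t))}{D(\delta(t))}-\mathbb{E}[N(t)]\right)$ is bounded. Then for every choice of positive numbers $\{a(t):t>0\}$ with $a(t)\to0$ and $v(\delta(t))a(t)\to\infty$ as $t\to\infty$, the family $\left\{\frac{N(t)-\mathbb{E}[N(t)]}{v(\delta(t))}\sqrt{v(\delta(t))a(t)}:t>0\right\}$ satisfies the large deviation principle with speed $1/a(t)$ and good rate function $\tilde{\Lambda}^*$ given by $\tilde{\Lambda}^*(x)=\frac{x^2}{2\Lambda''(0)}$ if $\Lambda''(0)>0$, and, if $\Lambda''(0)=0$, by $\tilde{\Lambda}^*(0)=0$ and $\tilde{\Lambda}^*(x)=\infty$ for $x\neq0$.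
   Context: A family of real random variables $\{X_t:t>0\}$ satisfies the large deviation principle (LDP) with speed $v_t\to\infty$ and rate function $I$ (a lower semicontinuous map $\mathbb{R}\to[0,\infty]$; good if all level sets $\{I\le\eta\}$ are compact) if $\limsup_{t\to\infty}\frac{1}{v_t}\log P(X_t\in C)\leq-\inf_{x\in C}I(x)$ for all closed $C$ and $\liminf_{t\to\infty}\frac{1}{v_t}\log P(X_t\in O)\geq-\inf_{x\in O}I(x)$ for all open $O$. *)

theory Defs
  imports "HOL-Probability.Probability"
begin

definition elog :: "real \<Rightarrow> ereal" where
  "elog p = (if p > 0 then ereal (ln p) else -\<infinity>)"

definition rate_function :: "(real \<Rightarrow> ereal) \<Rightarrow> bool" where
  "rate_function I \<longleftrightarrow> (\<forall>x. 0 \<le> I x) \<and> (\<forall>x. I x \<le> Liminf (at x) I)"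

definition good_rate_function :: "(real \<Rightarrow> ereal) \<Rightarrow> bool" where
  "good_rate_function I \<longleftrightarrow> rate_function I \<and> (\<forall>\<eta>::real. compact {x. I x \<le> ereal \<eta>})"

definition LDP :: "'a measure \<Rightarrow> (real \<Rightarrow> 'a \<Rightarrow> real) \<Rightarrow> (real \<Rightarrow> real) \<Rightarrow> (real \<Rightarrow> ereal) \<Rightarrow> bool" where
  "LDP M X s I \<longleftrightarrow> rate_function I \<and>
     (\<forall>C. closed C \<longrightarrow>
        Limsup at_top (\<lambda>t. elog (measure M {\<omega> \<in> space M. X t \<omega> \<in> C}) / ereal (s t))
          \<le> - (INF x\<in>C. I x)) \<and>
     (\<forall>U. open U \<longrightarrow>
        Liminf at_top (\<lambda>t. elog (measure M {\<omega> \<in> space M. X t \<omega> \<in> U}) / ereal (s t))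
          \<ge> - (INF x\<in>U. I x))"

definition pser :: "(nat \<Rightarrow> real) \<Rightarrow> real \<Rightarrow> real" where
  "pser c x = (\<Sum>k. c k * x ^ k)"

definition Lam :: "(real \<Rightarrow> real) \<Rightarrow> real \<Rightarrow> real" where
  "Lam \<Delta> \<theta> = \<Delta> (exp \<theta>) - \<Delta> 1"

text \<open>The rate function tilde Lambda^* (given separately for the two cases).\<close>
definition rate_pos :: "real \<Rightarrow> real \<Rightarrow> ereal" where
  "rate_pos L2 x = ereal (x\<^sup>2 / (2 * L2))"

definition rate_zero :: "real \<Rightarrow> ereal" where
  "rate_zero x = (if x = 0 then 0 else \<infinity>)"

end

theory Submission
  imports Defs
begin

(*
  With \<theta>(t) = \<mu> / sqrt (v(\<delta>(t)) a(t)) the scaled log moment generating function of X(t) is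
  a(t) (log E exp(\<theta> N(t)) - \<theta> E N(t)).  Up to finitely many indices, whose weights are
  negligible by (B2) and (B3), N(t) has the power series distribution of D at \<delta>(t); hence
  log E exp(\<theta> N(t)) = log (D(e^\<theta> \<delta>(t)) / D(\<delta>(t))) + O(1) = v(\<delta>(t)) \<Lambda>(\<theta>) + O(1) by (i).
  A second order expansion of \<Lambda> at 0, with (ii) and (iii) controlling the linear term, gives
  a(t) log E exp(\<mu> X(t) / a(t)) --> \<Lambda>''(0) \<mu>^2 / 2 for every \<mu>.

  The LDP follows from this quadratic limit as in the Gaertner-Ellis theorem: exponential
  Chebyshev bounds give the upper bound, and tilting by \<mu> = x / \<Lambda>''(0) gives the lower bound.
  If \<Lambda>''(0) = 0, then X(t) leaves every neighbourhood of 0 with probability smaller than any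
  exp(-K / a(t)).
*)

section \<open>Large deviation principles from logarithmic estimates\<close>

lemma elog_div_inverse:
  assumes "a > 0" and "p > 0"
  shows "elog p / ereal (1 / a) = ereal (a * ln p)"
  using assms by (simp add: elog_def)

lemma elog_div_inverse_less:
  assumes a: "a > 0" and p: "0 \<le> p" and log_bound: "p > 0 \<Longrightarrow> a * ln p < r"
  shows "elog p / ereal (1 / a) < ereal r"
proof (cases "p > 0")
  case True
  then show ?thesis using a log_bound by (simp add: elog_div_inverse)
next
  case False
  then show ?thesis using a p by (simp add: elog_def)
qed

lemma LDP_from_log_bounds:
  fixes M :: "'a measure" and X :: "real \<Rightarrow> 'a \<Rightarrow> real"
  assumes P: "prob_space M" and I: "rate_function I"
    and a_pos: "\<forall>\<^sub>F t in at_top. a t > 0"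
    and upper: "\<And>C r. closed C \<Longrightarrow> 0 \<le> r \<Longrightarrow> ereal r < (INF x\<in>C. I x) \<Longrightarrow>
       \<forall>\<^sub>F t in at_top. measure M {\<omega> \<in> space M. X t \<omega> \<in> C} > 0 \<longrightarrow>
           a t * ln (measure M {\<omega> \<in> space M. X t \<omega> \<in> C}) < - r"
    and lower: "\<And>U r. open U \<Longrightarrow> (INF x\<in>U. I x) < ereal r \<Longrightarrow>
       \<forall>\<^sub>F t in at_top. measure M {\<omega> \<in> space M. X t \<omega> \<in> U} > 0 \<and>
           a t * ln (measure M {\<omega> \<in> space M. X t \<omega> \<in> U}) > - r"
  shows "LDP M X (\<lambda>t. 1 / a t) I"
  unfolding LDP_def
proof (intro conjI allI impI)
  show "rate_function I" by fact
next
  fix C :: "real set" assume C: "closed C"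
  let ?p = "\<lambda>t. measure M {\<omega> \<in> space M. X t \<omega> \<in> C}"
  show "Limsup at_top (\<lambda>t. elog (?p t) / ereal (1 / a t)) \<le> - (INF x\<in>C. I x)"
    unfolding Limsup_le_iff
  proof (intro allI impI)
    fix y assume "- (INF x\<in>C. I x) < y"
    then obtain r :: real where r: "- (INF x\<in>C. I x) < ereal r" "ereal r < y"
      using ereal_dense2 by blast
    have "\<forall>\<^sub>F t in at_top. ?p t > 0 \<longrightarrow> a t * ln (?p t) < r"
    proof (cases "r > 0")
      case True
      show ?thesis using a_pos
      proof eventually_elim
        case (elim t)
        show ?case
        proof
          assume "?p t > 0"
          moreover have "?p t \<le> 1" by (rule prob_space.prob_le_1[OF P])
          ultimately have "a t * ln (?p t) \<le> 0" using elim by (simp add: mult_nonneg_nonpos)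
          then show "a t * ln (?p t) < r" using True by linarith
        qed
      qed
    next
      case False
      have "ereal (- r) < (INF x\<in>C. I x)" using r(1)
        by (metis ereal_minus_less_minus ereal_uminus_uminus uminus_ereal.simps(1))
      with upper[OF C, of "- r"] False show ?thesis by simp
    qed
    with a_pos show "\<forall>\<^sub>F t in at_top. elog (?p t) / ereal (1 / a t) < y"
    proof eventually_elim
      case (elim t)
      then have "elog (?p t) / ereal (1 / a t) < ereal r"
        by (intro elog_div_inverse_less) auto
      then show ?case using r(2) by order
    qed
  qed
next
  fix U :: "real set" assume U: "open U"
  let ?p = "\<lambda>t. measure M {\<omega> \<in> space M. X t \<omega> \<in> U}"
  show "- (INF x\<in>U. I x) \<le> Liminf at_top (\<lambda>t. elog (?p t) / ereal (1 / a t))"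
    unfolding le_Liminf_iff
  proof (intro allI impI)
    fix y assume "y < - (INF x\<in>U. I x)"
    then obtain r :: real where r: "y < ereal r" "ereal r < - (INF x\<in>U. I x)"
      using ereal_dense2 by blast
    have "(INF x\<in>U. I x) < ereal (- r)" using r(2)
      by (metis ereal_minus_less_minus ereal_uminus_uminus uminus_ereal.simps(1))
    from lower[OF U this] a_pos
    show "\<forall>\<^sub>F t in at_top. y < elog (?p t) / ereal (1 / a t)"
    proof eventually_elim
      case (elim t)
      then have "ereal r < elog (?p t) / ereal (1 / a t)" by (simp add: elog_div_inverse)
      then show ?case using r(1) by order
    qed
  qed
qed

lemma eventually_log_less_of_exp_bound:
  fixes a p :: "real \<Rightarrow> real"
  assumes a_pos: "\<forall>\<^sub>F t in at_top. a t > 0" and a_lim: "(a \<longlongrightarrow> 0) at_top"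
    and bound: "\<forall>\<^sub>F t in at_top. p t \<le> 2 * exp (- K / a t)" and "r < K"
  shows "\<forall>\<^sub>F t in at_top. p t > 0 \<longrightarrow> a t * ln (p t) < - r"
proof -
  have "\<forall>\<^sub>F t in at_top. a t < (K - r) / (2 * ln 2)"
    using a_lim by (rule order_tendstoD) (use \<open>r < K\<close> in simp)
  with a_pos bound show ?thesis
  proof eventually_elim
    case (elim t)
    show ?case
    proof
      assume p: "p t > 0"
      have "ln (p t) \<le> ln 2 - K / a t"
        using p elim(2) ln_le_cancel_iff[of "p t" "2 * exp (- K / a t)"] by (simp add: ln_mult)
      then have "a t * ln (p t) \<le> a t * ln 2 - K"
        using elim(1) mult_left_mono[of _ _ "a t"] by (fastforce simp: field_simps)
      moreover have "a t * ln 2 < (K - r) / 2" using elim(1,3) by (simp add: field_simps)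
      ultimately show "a t * ln (p t) < - r" using \<open>r < K\<close> by argo
    qed
  qed
qed

lemma eventually_log_greater_of_exp_bound:
  fixes a p :: "real \<Rightarrow> real"
  assumes a_pos: "\<forall>\<^sub>F t in at_top. a t > 0" and a_lim: "(a \<longlongrightarrow> 0) at_top"
    and bound: "\<forall>\<^sub>F t in at_top. exp (- K / a t) / 2 \<le> p t" and "K < r"
  shows "\<forall>\<^sub>F t in at_top. p t > 0 \<and> a t * ln (p t) > - r"
proof -
  have "\<forall>\<^sub>F t in at_top. a t < (r - K) / (2 * ln 2)"
    using a_lim by (rule order_tendstoD) (use \<open>K < r\<close> in simp)
  with a_pos bound show ?thesis
  proof eventually_elim
    case (elim t)
    have "0 < exp (- K / a t) / 2" by simp
    with elim(2) have p: "p t > 0" by linarith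
    have "- K / a t - ln 2 \<le> ln (p t)"
      using p elim(2) ln_le_cancel_iff[of "exp (- K / a t) / 2" "p t"] by (simp add: ln_div)
    then have "- K - a t * ln 2 \<le> a t * ln (p t)"
      using elim(1) mult_left_mono[of _ _ "a t"] by (fastforce simp: field_simps)
    moreover have "a t * ln 2 < (r - K) / 2" using elim(1,3) by (simp add: field_simps)
    ultimately show ?case using p \<open>K < r\<close> by argo
  qed
qed

lemma eventually_exp_neg_div_le:
  fixes a :: "real \<Rightarrow> real"
  assumes a_pos: "\<forall>\<^sub>F t in at_top. a t > 0" and a_lim: "(a \<longlongrightarrow> 0) at_top"
    and "\<gamma> > 0" and "\<epsilon> > 0"
  shows "\<forall>\<^sub>F t in at_top. exp (- \<gamma> / a t) \<le> \<epsilon>"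
proof -
  have "\<forall>\<^sub>F t in at_top. a t < \<gamma> / (\<bar>ln \<epsilon>\<bar> + 1)"
    using a_lim by (rule order_tendstoD) (use \<open>\<gamma> > 0\<close> in simp)
  with a_pos show ?thesis
  proof eventually_elim
    case (elim t)
    then have "\<bar>ln \<epsilon>\<bar> + 1 < \<gamma> / a t" by (simp add: field_simps)
    then have "- \<gamma> / a t < ln \<epsilon>" by linarith
    then show ?case using \<open>\<epsilon> > 0\<close> by (metis exp_ln exp_less_mono less_imp_le)
  qed
qed

lemma rate_function_rate_pos: "c > 0 \<Longrightarrow> rate_function (rate_pos c)"
  unfolding rate_function_def
proof (intro conjI allI)
  fix x
  assume "c > 0"
  then show "0 \<le> rate_pos c x" by (simp add: rate_pos_def)
  have "((\<lambda>y. ereal (y\<^sup>2 / (2 * c))) \<longlongrightarrow> ereal (x\<^sup>2 / (2 * c))) (at x)"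
    using \<open>c > 0\<close> by (intro tendsto_intros) auto
  then have "Liminf (at x) (rate_pos c) = rate_pos c x"
    unfolding rate_pos_def by (intro lim_imp_Liminf) auto
  then show "rate_pos c x \<le> Liminf (at x) (rate_pos c)" by simp
qed

lemma good_rate_function_rate_pos:
  assumes c: "c > 0"
  shows "good_rate_function (rate_pos c)"
  unfolding good_rate_function_def
proof (intro conjI allI)
  show "rate_function (rate_pos c)" using rate_function_rate_pos[OF c] .
  fix \<eta> :: real
  have level: "{x. rate_pos c x \<le> ereal \<eta>} = {x. x\<^sup>2 / (2 * c) \<le> \<eta>}"
    by (simp add: rate_pos_def)
  have "closed {x::real. x\<^sup>2 / (2 * c) \<le> \<eta>}"
    using c by (intro closed_Collect_le continuous_intros) auto
  moreover have "{x::real. x\<^sup>2 / (2 * c) \<le> \<eta>} \<subseteq> cball 0 (sqrt (2 * c * \<eta>))"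
    using c real_le_rsqrt[of "\<bar>_\<bar>" "2 * c * \<eta>"] by (auto simp: field_simps)
  ultimately show "compact {x. rate_pos c x \<le> ereal \<eta>}"
    unfolding level by (metis bounded_cball bounded_subset compact_eq_bounded_closed)
qed

lemma rate_function_rate_zero: "rate_function rate_zero"
  unfolding rate_function_def
proof (intro conjI allI)
  fix x :: real
  show "0 \<le> rate_zero x" by (simp add: rate_zero_def)
  show "rate_zero x \<le> Liminf (at x) rate_zero"
  proof (cases "x = 0")
    case True
    have "0 \<le> Liminf (at x) rate_zero" by (intro Liminf_bounded) (simp add: rate_zero_def)
    then show ?thesis using True by (simp add: rate_zero_def)
  next
    case False
    have "\<forall>\<^sub>F y in at x. y \<noteq> 0"
      using tendsto_imp_eventually_ne[OF tendsto_ident_at False] .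
    then have "\<forall>\<^sub>F y in at x. \<infinity> \<le> rate_zero y" by eventually_elim (simp add: rate_zero_def)
    then have "\<infinity> \<le> Liminf (at x) rate_zero" by (rule Liminf_bounded)
    then show ?thesis by simp
  qed
qed

lemma good_rate_function_rate_zero: "good_rate_function rate_zero"
  unfolding good_rate_function_def
proof (intro conjI allI)
  show "rate_function rate_zero" by (rule rate_function_rate_zero)
  fix \<eta> :: real
  have "{x. rate_zero x \<le> ereal \<eta>} = (if 0 \<le> \<eta> then {0} else {})"
    by (auto simp: rate_zero_def)
  then show "compact {x. rate_zero x \<le> ereal \<eta>}" by simp
qed

section \<open>A Gaertner-Ellis theorem for quadratic limits\<close>

lemma exp_le_local_plus_tilts:
  fixes y x \<kappa> \<eta> \<epsilon> s :: real
  assumes s: "s > 0" and \<eta>: "\<eta> \<ge> 0"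
  shows "exp (\<kappa> * y / s) \<le> exp ((\<kappa> * x + \<bar>\<kappa>\<bar> * \<epsilon>) / s) * indicator {z. \<bar>z - x\<bar> < \<epsilon>} y
          + exp (- \<eta> * (x + \<epsilon>) / s) * exp ((\<kappa> + \<eta>) * y / s)
          + exp (\<eta> * (x - \<epsilon>) / s) * exp ((\<kappa> - \<eta>) * y / s)"
proof -
  have exp_mult: "exp (u / s) * exp (u' / s) = exp ((u + u') / s)" for u u'
    by (simp add: exp_add[symmetric] add_divide_distrib)
  consider "\<bar>y - x\<bar> < \<epsilon>" | "x + \<epsilon> \<le> y" | "y \<le> x - \<epsilon>" by linarith
  then show ?thesis
  proof cases
    case 1
    have "\<kappa> * (y - x) \<le> \<bar>\<kappa>\<bar> * \<epsilon>"
      using 1 abs_ge_self[of "\<kappa> * (y - x)"] mult_left_mono[of "\<bar>y - x\<bar>" \<epsilon> "\<bar>\<kappa>\<bar>"]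
      by (simp add: abs_mult)
    then have "exp (\<kappa> * y / s) \<le> exp ((\<kappa> * x + \<bar>\<kappa>\<bar> * \<epsilon>) / s)"
      using s by (simp add: divide_right_mono algebra_simps)
    then show ?thesis using 1 by (simp add: add_increasing2)
  next
    case 2
    then have "\<kappa> * y \<le> - \<eta> * (x + \<epsilon>) + (\<kappa> + \<eta>) * y"
      using \<eta> mult_left_mono[of "x + \<epsilon>" y \<eta>] by (simp add: algebra_simps)
    then have "exp (\<kappa> * y / s) \<le> exp (- \<eta> * (x + \<epsilon>) / s) * exp ((\<kappa> + \<eta>) * y / s)"
      using s unfolding exp_mult by (simp add: divide_right_mono)
    then show ?thesis by (simp add: add_increasing add_increasing2)
  next
    case 3
    then have "\<kappa> * y \<le> \<eta> * (x - \<epsilon>) + (\<kappa> - \<eta>) * y"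
      using \<eta> mult_left_mono[of y "x - \<epsilon>" \<eta>] by (simp add: algebra_simps)
    then have "exp (\<kappa> * y / s) \<le> exp (\<eta> * (x - \<epsilon>) / s) * exp ((\<kappa> - \<eta>) * y / s)"
      using s unfolding exp_mult by (simp add: divide_right_mono)
    then show ?thesis by (simp add: add_increasing)
  qed
qed

lemma (in prob_space) integral_exp_le_local_plus_tilts:
  fixes Y :: "'a \<Rightarrow> real"
  assumes Y: "Y \<in> borel_measurable M" and s: "s > 0" and \<eta>: "\<eta> \<ge> 0"
    and int: "integrable M (\<lambda>\<omega>. exp (\<kappa> * Y \<omega> / s))"
    and int_plus: "integrable M (\<lambda>\<omega>. exp ((\<kappa> + \<eta>) * Y \<omega> / s))"
    and int_minus: "integrable M (\<lambda>\<omega>. exp ((\<kappa> - \<eta>) * Y \<omega> / s))"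
  shows "(\<integral>\<omega>. exp (\<kappa> * Y \<omega> / s) \<partial>M)
      \<le> exp ((\<kappa> * x + \<bar>\<kappa>\<bar> * \<epsilon>) / s) * prob {\<omega> \<in> space M. \<bar>Y \<omega> - x\<bar> < \<epsilon>}
        + exp (- \<eta> * (x + \<epsilon>) / s) * (\<integral>\<omega>. exp ((\<kappa> + \<eta>) * Y \<omega> / s) \<partial>M)
        + exp (\<eta> * (x - \<epsilon>) / s) * (\<integral>\<omega>. exp ((\<kappa> - \<eta>) * Y \<omega> / s) \<partial>M)"
proof -
  let ?S = "{\<omega> \<in> space M. \<bar>Y \<omega> - x\<bar> < \<epsilon>}"
  have S: "?S \<in> sets M" using Y by measurable
  then have "integrable M (indicator ?S :: 'a \<Rightarrow> real)"
    by (intro integrable_real_indicator) (simp_all add: less_top[symmetric])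
  have "(\<integral>\<omega>. exp (\<kappa> * Y \<omega> / s) \<partial>M)
      \<le> (\<integral>\<omega>. exp ((\<kappa> * x + \<bar>\<kappa>\<bar> * \<epsilon>) / s) * indicator ?S \<omega>
          + exp (- \<eta> * (x + \<epsilon>) / s) * exp ((\<kappa> + \<eta>) * Y \<omega> / s)
          + exp (\<eta> * (x - \<epsilon>) / s) * exp ((\<kappa> - \<eta>) * Y \<omega> / s) \<partial>M)"
  proof (rule integral_mono)
    fix \<omega> assume "\<omega> \<in> space M"
    then have "indicator ?S \<omega> = (indicator {z. \<bar>z - x\<bar> < \<epsilon>} (Y \<omega>) :: real)"
      by (simp add: indicator_def)
    then show "exp (\<kappa> * Y \<omega> / s) \<le> exp ((\<kappa> * x + \<bar>\<kappa>\<bar> * \<epsilon>) / s) * indicator ?S \<omega>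
          + exp (- \<eta> * (x + \<epsilon>) / s) * exp ((\<kappa> + \<eta>) * Y \<omega> / s)
          + exp (\<eta> * (x - \<epsilon>) / s) * exp ((\<kappa> - \<eta>) * Y \<omega> / s)"
      using exp_le_local_plus_tilts[OF s \<eta>] by simp
  next
    show "integrable M (\<lambda>\<omega>. exp ((\<kappa> * x + \<bar>\<kappa>\<bar> * \<epsilon>) / s) * indicator ?S \<omega>
          + exp (- \<eta> * (x + \<epsilon>) / s) * exp ((\<kappa> + \<eta>) * Y \<omega> / s)
          + exp (\<eta> * (x - \<epsilon>) / s) * exp ((\<kappa> - \<eta>) * Y \<omega> / s))"
      using int_plus int_minus \<open>integrable M (indicator ?S)\<close>
      by (intro Bochner_Integration.integrable_add integrable_mult_right)
  qed (rule int)
  also have "\<dots> = exp ((\<kappa> * x + \<bar>\<kappa>\<bar> * \<epsilon>) / s) * prob ?S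
        + exp (- \<eta> * (x + \<epsilon>) / s) * (\<integral>\<omega>. exp ((\<kappa> + \<eta>) * Y \<omega> / s) \<partial>M)
        + exp (\<eta> * (x - \<epsilon>) / s) * (\<integral>\<omega>. exp ((\<kappa> - \<eta>) * Y \<omega> / s) \<partial>M)"
    using int_plus int_minus S \<open>integrable M (indicator ?S)\<close> by simp
  finally show ?thesis .
qed

locale quadratic_log_mgf = prob_space M for M :: "'a measure" +
  fixes X :: "real \<Rightarrow> 'a \<Rightarrow> real" and a :: "real \<Rightarrow> real" and c :: real
  assumes X_measurable: "\<forall>\<^sub>F t in at_top. X t \<in> borel_measurable M"
    and a_pos: "\<forall>\<^sub>F t in at_top. a t > 0"
    and a_tendsto_0: "(a \<longlongrightarrow> 0) at_top"
    and mgf_integrable: "\<And>\<mu>. \<forall>\<^sub>F t in at_top. integrable M (\<lambda>\<omega>. exp (\<mu> * X t \<omega> / a t))"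
    and log_mgf_tendsto:
      "\<And>\<mu>. ((\<lambda>t. a t * ln (\<integral>\<omega>. exp (\<mu> * X t \<omega> / a t) \<partial>M)) \<longlongrightarrow> c * \<mu>\<^sup>2 / 2) at_top"
begin

lemma eventually_mgf_le:
  assumes "c * \<mu>\<^sup>2 / 2 < L"
  shows "\<forall>\<^sub>F t in at_top. (\<integral>\<omega>. exp (\<mu> * X t \<omega> / a t) \<partial>M) \<le> exp (L / a t)"
proof -
  have "\<forall>\<^sub>F t in at_top. a t * ln (\<integral>\<omega>. exp (\<mu> * X t \<omega> / a t) \<partial>M) < L"
    using log_mgf_tendsto assms by (rule order_tendstoD)
  with a_pos mgf_integrable[of \<mu>] show ?thesis
  proof eventually_elim
    case (elim t)
    then have "0 < (\<integral>\<omega>. exp (\<mu> * X t \<omega> / a t) \<partial>M)" by (intro expectation_greater) auto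
    moreover have "ln (\<integral>\<omega>. exp (\<mu> * X t \<omega> / a t) \<partial>M) < L / a t"
      using elim by (simp add: field_simps mult.commute)
    ultimately show ?case by (metis exp_le_cancel_iff exp_ln less_imp_le)
  qed
qed

lemma eventually_mgf_ge:
  assumes "L < c * \<mu>\<^sup>2 / 2"
  shows "\<forall>\<^sub>F t in at_top. exp (L / a t) \<le> (\<integral>\<omega>. exp (\<mu> * X t \<omega> / a t) \<partial>M)"
proof -
  have "\<forall>\<^sub>F t in at_top. L < a t * ln (\<integral>\<omega>. exp (\<mu> * X t \<omega> / a t) \<partial>M)"
    using log_mgf_tendsto assms by (rule order_tendstoD)
  with a_pos mgf_integrable[of \<mu>] show ?thesis
  proof eventually_elim
    case (elim t)
    then have "0 < (\<integral>\<omega>. exp (\<mu> * X t \<omega> / a t) \<partial>M)" by (intro expectation_greater) auto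
    moreover have "L / a t < ln (\<integral>\<omega>. exp (\<mu> * X t \<omega> / a t) \<partial>M)"
      using elim by (simp add: field_simps mult.commute)
    ultimately show ?case by (metis exp_le_cancel_iff exp_ln less_imp_le)
  qed
qed

lemma eventually_prob_tail_le:
  assumes \<kappa>: "\<kappa> > 0" and \<sigma>: "\<sigma> \<in> {-1, 1}" and K: "c * \<kappa>\<^sup>2 / 2 - \<kappa> * \<rho> < - K"
  shows "\<forall>\<^sub>F t in at_top. prob {\<omega> \<in> space M. \<rho> \<le> \<sigma> * X t \<omega>} \<le> exp (- K / a t)"
proof -
  define L where "L = (c * \<kappa>\<^sup>2 / 2 + \<kappa> * \<rho> - K) / 2"
  have "c * (\<sigma> * \<kappa>)\<^sup>2 / 2 < L" using \<sigma> K by (auto simp: L_def power_mult_distrib)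
  from eventually_mgf_le[OF this] a_pos mgf_integrable[of "\<sigma> * \<kappa>"]
  show ?thesis
  proof eventually_elim
    case (elim t)
    have integrand: "\<kappa> / a t * (\<sigma> * X t \<omega>) = \<sigma> * \<kappa> * X t \<omega> / a t" for \<omega>
      by simp
    have "prob {\<omega> \<in> space M. \<rho> \<le> \<sigma> * X t \<omega>}
        \<le> exp (- (\<kappa> / a t) * \<rho>) * (\<integral>\<omega>\<in>space M. exp (\<kappa> / a t * (\<sigma> * X t \<omega>)) \<partial>M)"
    proof (rule Chernoff_ineq_ge)
      show "set_integrable M (space M) (\<lambda>\<omega>. exp (\<kappa> / a t * (\<sigma> * X t \<omega>)))"
        unfolding set_integrable_def integrand using elim(3) by (intro integrable_mult_indicator) auto
    qed (use \<kappa> elim(2) in auto)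
    also have "\<dots> = exp (- \<kappa> * \<rho> / a t) * (\<integral>\<omega>. exp (\<sigma> * \<kappa> * X t \<omega> / a t) \<partial>M)"
      unfolding integrand using elim(3) by (simp add: set_integral_space)
    also have "\<dots> \<le> exp (- \<kappa> * \<rho> / a t) * exp (L / a t)"
      using elim(1) by (intro mult_left_mono) auto
    also have "\<dots> = exp ((L - \<kappa> * \<rho>) / a t)"
      by (simp add: exp_add[symmetric] diff_divide_distrib)
    also have "\<dots> \<le> exp (- K / a t)"
    proof -
      have "L - \<kappa> * \<rho> \<le> - K" using K unfolding L_def by argo
      then have "(L - \<kappa> * \<rho>) / a t \<le> - K / a t" using elim(2) by (intro divide_right_mono) auto
      then show ?thesis by simp
    qed
    finally show ?case .
  qed
qed

lemma eventually_prob_abs_ge_le: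
  assumes \<kappa>: "\<kappa> > 0" and K: "c * \<kappa>\<^sup>2 / 2 - \<kappa> * \<rho> < - K"
  shows "\<forall>\<^sub>F t in at_top. prob {\<omega> \<in> space M. \<rho> \<le> \<bar>X t \<omega>\<bar>} \<le> 2 * exp (- K / a t)"
proof -
  have "\<forall>\<^sub>F t in at_top. prob {\<omega> \<in> space M. \<rho> \<le> X t \<omega>} \<le> exp (- K / a t)"
    using eventually_prob_tail_le[OF \<kappa> _ K, of 1] by simp
  moreover have "\<forall>\<^sub>F t in at_top. prob {\<omega> \<in> space M. \<rho> \<le> - X t \<omega>} \<le> exp (- K / a t)"
    using eventually_prob_tail_le[OF \<kappa> _ K, of "-1"] by simp
  ultimately show ?thesis using X_measurable
  proof eventually_elim
    case (elim t)
    have "{\<omega> \<in> space M. \<rho> \<le> \<bar>X t \<omega>\<bar>}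
        = {\<omega> \<in> space M. \<rho> \<le> X t \<omega>} \<union> {\<omega> \<in> space M. \<rho> \<le> - X t \<omega>}"
      by auto
    also have "prob \<dots> \<le> prob {\<omega> \<in> space M. \<rho> \<le> X t \<omega>} + prob {\<omega> \<in> space M. \<rho> \<le> - X t \<omega>}"
      using elim(3) by (intro measure_Un_le; measurable)
    finally show ?case using elim(1,2) by simp
  qed
qed

lemma eventually_log_prob_less:
  assumes \<kappa>: "\<kappa> > 0" and r: "c * \<kappa>\<^sup>2 / 2 - \<kappa> * \<rho> < - r" and C: "C \<subseteq> {x. \<rho> \<le> \<bar>x\<bar>}"
  shows "\<forall>\<^sub>F t in at_top. prob {\<omega> \<in> space M. X t \<omega> \<in> C} > 0 \<longrightarrow>
           a t * ln (prob {\<omega> \<in> space M. X t \<omega> \<in> C}) < - r"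
proof (rule eventually_log_less_of_exp_bound[OF a_pos a_tendsto_0])
  define K where "K = (r - (c * \<kappa>\<^sup>2 / 2 - \<kappa> * \<rho>)) / 2"
  show "r < K" using r unfolding K_def by argo
  have K: "c * \<kappa>\<^sup>2 / 2 - \<kappa> * \<rho> < - K" using r unfolding K_def by argo
  from eventually_prob_abs_ge_le[OF \<kappa> K] X_measurable
  show "\<forall>\<^sub>F t in at_top. prob {\<omega> \<in> space M. X t \<omega> \<in> C} \<le> 2 * exp (- K / a t)"
  proof eventually_elim
    case (elim t)
    have "prob {\<omega> \<in> space M. X t \<omega> \<in> C} \<le> prob {\<omega> \<in> space M. \<rho> \<le> \<bar>X t \<omega>\<bar>}"
      using C elim(2) by (intro finite_measure_mono) (auto, measurable)
    then show ?case using elim(1) by linarith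
  qed
qed

lemma eventually_prob_near_ge:
  assumes c: "c > 0" and \<epsilon>: "\<epsilon> > 0"
  shows "\<forall>\<^sub>F t in at_top. exp (- (x\<^sup>2 / (2 * c) + \<epsilon>\<^sup>2 / (8 * c) + \<bar>x / c\<bar> * \<epsilon>) / a t) / 2
           \<le> prob {\<omega> \<in> space M. \<bar>X t \<omega> - x\<bar> < \<epsilon>}"
proof -
  \<comment> \<open>Tilt by \<kappa> = x/c: the parts of E exp(\<kappa>X/a) where |X - x| \<ge> \<epsilon> are bounded through the
    tilts \<kappa> \<plusminus> \<eta> and are smaller than the whole by a factor exp(-\<gamma>/(4a)).\<close>
  define \<kappa> where "\<kappa> = x / c"
  define \<eta> where "\<eta> = \<epsilon> / c"
  define \<gamma> where "\<gamma> = \<epsilon>\<^sup>2 / (2 * c)"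
  define \<Lambda> where "\<Lambda> = x\<^sup>2 / (2 * c)"
  define B where "B = \<kappa> * x + \<bar>\<kappa>\<bar> * \<epsilon>"
  have \<gamma>: "\<gamma> > 0" and \<eta>: "\<eta> \<ge> 0" using c \<epsilon> by (simp_all add: \<gamma>_def \<eta>_def)
  have exponent: "\<Lambda> - \<gamma> / 4 - B = - (x\<^sup>2 / (2 * c) + \<epsilon>\<^sup>2 / (8 * c) + \<bar>x / c\<bar> * \<epsilon>)"
    using c by (simp add: \<kappa>_def \<Lambda>_def \<gamma>_def B_def power2_eq_square field_simps)
  have "c * \<kappa>\<^sup>2 / 2 > \<Lambda> - \<gamma> / 4"
    using c \<gamma> by (simp add: \<kappa>_def \<Lambda>_def power2_eq_square field_simps)
  note lower = eventually_mgf_ge[OF this]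
  have "c * (\<kappa> + \<eta>)\<^sup>2 / 2 = \<Lambda> - \<gamma> + \<eta> * (x + \<epsilon>)"
    using c by (simp add: \<kappa>_def \<eta>_def \<Lambda>_def \<gamma>_def power2_eq_square field_simps)
  then have "c * (\<kappa> + \<eta>)\<^sup>2 / 2 < \<Lambda> - \<gamma> / 2 + \<eta> * (x + \<epsilon>)" using \<gamma> by linarith
  note upper_plus = eventually_mgf_le[OF this]
  have "c * (\<kappa> - \<eta>)\<^sup>2 / 2 = \<Lambda> - \<gamma> - \<eta> * (x - \<epsilon>)"
    using c by (simp add: \<kappa>_def \<eta>_def \<Lambda>_def \<gamma>_def power2_eq_square field_simps)
  then have "c * (\<kappa> - \<eta>)\<^sup>2 / 2 < \<Lambda> - \<gamma> / 2 - \<eta> * (x - \<epsilon>)" using \<gamma> by linarith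
  note upper_minus = eventually_mgf_le[OF this]
  have small: "\<forall>\<^sub>F t in at_top. exp (- (\<gamma> / 4) / a t) \<le> 1 / 4"
    using \<gamma> by (intro eventually_exp_neg_div_le[OF a_pos a_tendsto_0]) auto
  from lower upper_plus upper_minus small a_pos X_measurable
    mgf_integrable[of \<kappa>] mgf_integrable[of "\<kappa> + \<eta>"] mgf_integrable[of "\<kappa> - \<eta>"]
  show ?thesis
  proof eventually_elim
    case (elim t)
    let ?p = "prob {\<omega> \<in> space M. \<bar>X t \<omega> - x\<bar> < \<epsilon>}"
    have exp_mult: "exp (u / a t) * exp (u' / a t) = exp ((u + u') / a t)" for u u'
      by (simp add: exp_add[symmetric] add_divide_distrib)
    have split: "exp ((\<Lambda> - \<gamma> / 2) / a t) = exp ((\<Lambda> - \<gamma> / 4) / a t) * exp (- (\<gamma> / 4) / a t)"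
      unfolding exp_mult by (rule arg_cong[where f = "\<lambda>u. exp (u / a t)"]) linarith
    have quarter: "exp ((\<Lambda> - \<gamma> / 4) / a t) * exp (- (\<gamma> / 4) / a t) \<le> exp ((\<Lambda> - \<gamma> / 4) / a t) * (1 / 4)"
      using elim(4) by (intro mult_left_mono) auto
    have "exp ((\<Lambda> - \<gamma> / 4) / a t) \<le> exp (B / a t) * ?p
        + exp (- \<eta> * (x + \<epsilon>) / a t) * exp ((\<Lambda> - \<gamma> / 2 + \<eta> * (x + \<epsilon>)) / a t)
        + exp (\<eta> * (x - \<epsilon>) / a t) * exp ((\<Lambda> - \<gamma> / 2 - \<eta> * (x - \<epsilon>)) / a t)"
    proof -
      have "exp (- \<eta> * (x + \<epsilon>) / a t) * (\<integral>\<omega>. exp ((\<kappa> + \<eta>) * X t \<omega> / a t) \<partial>M)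
          \<le> exp (- \<eta> * (x + \<epsilon>) / a t) * exp ((\<Lambda> - \<gamma> / 2 + \<eta> * (x + \<epsilon>)) / a t)"
        using elim(2) by (intro mult_left_mono) auto
      moreover have "exp (\<eta> * (x - \<epsilon>) / a t) * (\<integral>\<omega>. exp ((\<kappa> - \<eta>) * X t \<omega> / a t) \<partial>M)
          \<le> exp (\<eta> * (x - \<epsilon>) / a t) * exp ((\<Lambda> - \<gamma> / 2 - \<eta> * (x - \<epsilon>)) / a t)"
        using elim(3) by (intro mult_left_mono) auto
      ultimately show ?thesis
        using elim(1) integral_exp_le_local_plus_tilts[OF elim(6,5) \<eta> elim(7-9), of x \<epsilon>]
        unfolding B_def by linarith
    qed
    also have "\<dots> = exp (B / a t) * ?p + 2 * exp ((\<Lambda> - \<gamma> / 2) / a t)"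
      unfolding exp_mult by (simp add: algebra_simps)
    finally have "exp ((\<Lambda> - \<gamma> / 4) / a t) / 2 \<le> exp (B / a t) * ?p"
      using split quarter by linarith
    moreover have "exp ((\<Lambda> - \<gamma> / 4) / a t) = exp (B / a t) * exp ((\<Lambda> - \<gamma> / 4 - B) / a t)"
      unfolding exp_mult by (rule arg_cong[where f = "\<lambda>u. exp (u / a t)"]) simp
    ultimately have "exp (B / a t) * (exp ((\<Lambda> - \<gamma> / 4 - B) / a t) / 2) \<le> exp (B / a t) * ?p"
      by (simp only: times_divide_eq_right)
    then show ?case unfolding exponent[symmetric] by (metis exp_gt_zero mult_le_cancel_left_pos)
  qed
qed


lemma LDP_rate_pos:
  assumes c: "c > 0"
  shows "LDP M X (\<lambda>t. 1 / a t) (rate_pos c)"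
proof (rule LDP_from_log_bounds[OF prob_space_axioms rate_function_rate_pos[OF c] a_pos])
  fix C r assume "closed C" and "0 \<le> r" and r: "ereal r < (INF x\<in>C. rate_pos c x)"
  obtain r' where "ereal r < ereal r'" and r': "ereal r' < (INF x\<in>C. rate_pos c x)"
    using ereal_dense2[OF r] by blast
  then have "r < r'" by simp
  define \<rho> where "\<rho> = sqrt (2 * c * r')"
  have \<rho>: "\<rho> > 0" "\<rho>\<^sup>2 = 2 * c * r'" using c \<open>0 \<le> r\<close> \<open>r < r'\<close> by (simp_all add: \<rho>_def)
  have "C \<subseteq> {x. \<rho> \<le> \<bar>x\<bar>}"
  proof
    fix x assume "x \<in> C"
    then have "ereal r' < rate_pos c x" using r' by (meson INF_lower order_less_le_trans)
    then have "\<rho>\<^sup>2 < \<bar>x\<bar>\<^sup>2" using c \<rho>(2) by (simp add: rate_pos_def field_simps)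
    then show "x \<in> {x. \<rho> \<le> \<bar>x\<bar>}" by (simp add: power2_less_imp_less less_imp_le)
  qed
  moreover have "c * (\<rho> / c)\<^sup>2 / 2 - \<rho> / c * \<rho> = - r'"
    using c \<rho>(2) by (simp add: power2_eq_square field_simps)
  then have "c * (\<rho> / c)\<^sup>2 / 2 - \<rho> / c * \<rho> < - r" using \<open>r < r'\<close> by linarith
  moreover have "\<rho> / c > 0" using c \<rho>(1) by simp
  ultimately show "\<forall>\<^sub>F t in at_top. prob {\<omega> \<in> space M. X t \<omega> \<in> C} > 0 \<longrightarrow>
      a t * ln (prob {\<omega> \<in> space M. X t \<omega> \<in> C}) < - r"
    by (intro eventually_log_prob_less)
next
  fix U r assume U: "open U" and "(INF x\<in>U. rate_pos c x) < ereal r"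
  then obtain x where "x \<in> U" and x: "x\<^sup>2 / (2 * c) < r"
    by (auto simp: INF_less_iff rate_pos_def)
  obtain e where "e > 0" and e: "ball x e \<subseteq> U" using U \<open>x \<in> U\<close> open_contains_ball by blast
  define K where "K = (\<lambda>\<epsilon>. x\<^sup>2 / (2 * c) + \<epsilon>\<^sup>2 / (8 * c) + \<bar>x / c\<bar> * \<epsilon>)"
  have "(K \<longlongrightarrow> x\<^sup>2 / (2 * c)) (at_right 0)"
    using c unfolding K_def by (auto intro!: tendsto_eq_intros)
  then have "\<forall>\<^sub>F \<epsilon> in at_right 0. K \<epsilon> < r" using x by (rule order_tendstoD)
  moreover have "\<forall>\<^sub>F \<epsilon> in at_right 0. \<epsilon> < e"
    using \<open>e > 0\<close> by (intro order_tendstoD[OF tendsto_ident_at]) auto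
  ultimately have "\<forall>\<^sub>F \<epsilon> in at_right 0. 0 < \<epsilon> \<and> \<epsilon> < e \<and> K \<epsilon> < r"
    using eventually_at_right_less by eventually_elim auto
  then obtain \<epsilon> where "0 < \<epsilon>" "\<epsilon> < e" "K \<epsilon> < r"
    using eventually_happens'[OF trivial_limit_at_right_real] by blast
  have "\<forall>\<^sub>F t in at_top. exp (- K \<epsilon> / a t) / 2 \<le> prob {\<omega> \<in> space M. X t \<omega> \<in> U}"
    using eventually_prob_near_ge[OF c \<open>0 < \<epsilon>\<close>, of x] X_measurable
  proof eventually_elim
    case (elim t)
    have "prob {\<omega> \<in> space M. \<bar>X t \<omega> - x\<bar> < \<epsilon>} \<le> prob {\<omega> \<in> space M. X t \<omega> \<in> U}"
    proof (rule finite_measure_mono)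
      show "{\<omega> \<in> space M. \<bar>X t \<omega> - x\<bar> < \<epsilon>} \<subseteq> {\<omega> \<in> space M. X t \<omega> \<in> U}"
        using e \<open>\<epsilon> < e\<close> by (auto simp: dist_real_def subset_iff)
      show "{\<omega> \<in> space M. X t \<omega> \<in> U} \<in> sets M" using elim(2) borel_open[OF U] by measurable
    qed
    then show ?case using elim(1) by (simp add: K_def)
  qed
  then show "\<forall>\<^sub>F t in at_top. prob {\<omega> \<in> space M. X t \<omega> \<in> U} > 0 \<and>
      a t * ln (prob {\<omega> \<in> space M. X t \<omega> \<in> U}) > - r"
    using \<open>K \<epsilon> < r\<close> by (rule eventually_log_greater_of_exp_bound[OF a_pos a_tendsto_0])
qed

lemma LDP_rate_zero:
  assumes c: "c = 0"
  shows "LDP M X (\<lambda>t. 1 / a t) rate_zero"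
proof (rule LDP_from_log_bounds[OF prob_space_axioms rate_function_rate_zero a_pos])
  fix C r assume C: "closed C" and "0 \<le> r" and r: "ereal r < (INF x\<in>C. rate_zero x)"
  have "0 \<notin> C"
  proof
    assume "0 \<in> C"
    then have "(INF x\<in>C. rate_zero x) \<le> 0" using INF_lower[of 0 C rate_zero] by (simp add: rate_zero_def)
    with r have "ereal r < 0" by order
    then show False using \<open>0 \<le> r\<close> by simp
  qed
  then obtain \<rho> where "\<rho> > 0" and "ball 0 \<rho> \<subseteq> - C"
    using C open_contains_ball[of "- C"] by auto
  then have "C \<subseteq> {x. \<rho> \<le> \<bar>x\<bar>}" by (force simp: dist_real_def)
  moreover have "c * ((r + 1) / \<rho>)\<^sup>2 / 2 - (r + 1) / \<rho> * \<rho> < - r" using c \<open>\<rho> > 0\<close> by simp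
  ultimately show "\<forall>\<^sub>F t in at_top. prob {\<omega> \<in> space M. X t \<omega> \<in> C} > 0 \<longrightarrow>
      a t * ln (prob {\<omega> \<in> space M. X t \<omega> \<in> C}) < - r"
    using \<open>\<rho> > 0\<close> \<open>0 \<le> r\<close> by (intro eventually_log_prob_less[of "(r + 1) / \<rho>"]) auto
next
  fix U r assume U: "open U" and "(INF x\<in>U. rate_zero x) < ereal r"
  then obtain x where "x \<in> U" and "rate_zero x < ereal r" by (auto simp: INF_less_iff)
  then have "0 \<in> U" and "0 < r" by (auto simp: rate_zero_def split: if_splits)
  obtain e where "e > 0" and e: "ball 0 e \<subseteq> U" using U \<open>0 \<in> U\<close> open_contains_ball by blast
  have "\<forall>\<^sub>F t in at_top. prob {\<omega> \<in> space M. e \<le> \<bar>X t \<omega>\<bar>} \<le> 2 * exp (- 1 / a t)"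
    using \<open>e > 0\<close> c by (intro eventually_prob_abs_ge_le[of "2 / e"]) auto
  moreover have "\<forall>\<^sub>F t in at_top. exp (- 1 / a t) \<le> 1 / 4"
    by (rule eventually_exp_neg_div_le[OF a_pos a_tendsto_0]) auto
  ultimately have "\<forall>\<^sub>F t in at_top. exp (- (r / 2) / a t) / 2 \<le> prob {\<omega> \<in> space M. X t \<omega> \<in> U}"
    using X_measurable a_pos
  proof eventually_elim
    case (elim t)
    have "1 - prob {\<omega> \<in> space M. e \<le> \<bar>X t \<omega>\<bar>} = prob (space M - {\<omega> \<in> space M. e \<le> \<bar>X t \<omega>\<bar>})"
      using elim(3) by (intro prob_compl[symmetric]) measurable
    also have "\<dots> \<le> prob {\<omega> \<in> space M. X t \<omega> \<in> U}"
    proof (rule finite_measure_mono)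
      show "space M - {\<omega> \<in> space M. e \<le> \<bar>X t \<omega>\<bar>} \<subseteq> {\<omega> \<in> space M. X t \<omega> \<in> U}"
        using e by (auto simp: subset_iff)
      show "{\<omega> \<in> space M. X t \<omega> \<in> U} \<in> sets M" using elim(3) borel_open[OF U] by measurable
    qed
    finally have "1 / 2 \<le> prob {\<omega> \<in> space M. X t \<omega> \<in> U}" using elim(1,2) by linarith
    moreover have "exp (- (r / 2) / a t) \<le> 1" using \<open>0 < r\<close> elim(4) by simp
    ultimately show ?case by linarith
  qed
  then show "\<forall>\<^sub>F t in at_top. prob {\<omega> \<in> space M. X t \<omega> \<in> U} > 0 \<and>
      a t * ln (prob {\<omega> \<in> space M. X t \<omega> \<in> U}) > - r"
    by (rule eventually_log_greater_of_exp_bound[OF a_pos a_tendsto_0]) (use \<open>0 < r\<close> in simp)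
qed

end

section \<open>Analytic estimates\<close>

lemma second_order_quotient_tendsto:
  fixes f f' :: "real \<Rightarrow> real"
  assumes f': "\<And>\<theta>. (f has_real_derivative f' \<theta>) (at \<theta>)"
    and f'': "(f' has_real_derivative L) (at 0)" and "f 0 = 0"
  shows "((\<lambda>\<theta>. (f \<theta> - f' 0 * \<theta>) / \<theta>\<^sup>2) \<longlongrightarrow> L / 2) (at 0)"
proof (rule lhopital[where f' = "\<lambda>\<theta>. f' \<theta> - f' 0" and g' = "\<lambda>\<theta>. 2 * \<theta>"])
  have "isCont (\<lambda>\<theta>. f \<theta> - f' 0 * \<theta>) 0"
    using DERIV_isCont[OF f'[of 0]] by (intro continuous_intros) auto
  then show "((\<lambda>\<theta>. f \<theta> - f' 0 * \<theta>) \<longlongrightarrow> 0) (at 0)"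
    using \<open>f 0 = 0\<close> by (simp add: isCont_def)
  show "((\<lambda>\<theta>::real. \<theta>\<^sup>2) \<longlongrightarrow> 0) (at 0)"
    by (auto intro!: tendsto_eq_intros)
  have nonzero: "\<forall>\<^sub>F \<theta> in at (0::real). \<theta> \<noteq> 0" by (simp add: eventually_at_filter)
  then show "\<forall>\<^sub>F \<theta> in at (0::real). \<theta>\<^sup>2 \<noteq> 0" by eventually_elim simp
  from nonzero show "\<forall>\<^sub>F \<theta> in at (0::real). 2 * \<theta> \<noteq> 0" by eventually_elim simp
  show "\<forall>\<^sub>F \<theta> in at 0. ((\<lambda>\<theta>. f \<theta> - f' 0 * \<theta>) has_real_derivative f' \<theta> - f' 0) (at \<theta>)"
    by (intro always_eventually allI derivative_eq_intros) (auto intro: f')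
  show "\<forall>\<^sub>F \<theta> in at 0. ((\<lambda>\<theta>. \<theta>\<^sup>2) has_real_derivative 2 * \<theta>) (at \<theta>)"
    by (intro always_eventually allI derivative_eq_intros) auto
  have "((\<lambda>\<theta>. (f' \<theta> - f' 0) / \<theta> / 2) \<longlongrightarrow> L / 2) (at 0)"
    using f'' by (intro tendsto_divide) (auto simp: has_field_derivative_iff)
  then show "((\<lambda>\<theta>. (f' \<theta> - f' 0) / (2 * \<theta>)) \<longlongrightarrow> L / 2) (at 0)"
    by (simp add: field_simps)
qed

lemma Lam_quotient_tendsto:
  assumes \<Delta>: "\<And>u. u > 0 \<Longrightarrow> \<Delta> differentiable (at u)"
    and \<Delta>': "deriv \<Delta> differentiable (at 1)"
  shows "((\<lambda>\<theta>. (Lam \<Delta> \<theta> - deriv (Lam \<Delta>) 0 * \<theta>) / \<theta>\<^sup>2) \<longlongrightarrow> deriv (deriv (Lam \<Delta>)) 0 / 2) (at 0)"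
proof -
  have Lam_eq: "Lam \<Delta> = (\<lambda>\<theta>. \<Delta> (exp \<theta>) - \<Delta> 1)" by (simp add: Lam_def fun_eq_iff)
  have Lam_deriv: "(Lam \<Delta> has_real_derivative deriv \<Delta> (exp \<theta>) * exp \<theta>) (at \<theta>)" for \<theta>
  proof -
    have "(\<Delta> has_real_derivative deriv \<Delta> (exp \<theta>)) (at (exp \<theta>))"
      using \<Delta>[of "exp \<theta>"] by (simp add: DERIV_deriv_iff_real_differentiable)
    from DERIV_diff[OF DERIV_chain2[OF this DERIV_exp] DERIV_const[of "\<Delta> 1"]]
    show ?thesis unfolding Lam_eq by simp
  qed
  then have deriv_Lam: "deriv (Lam \<Delta>) = (\<lambda>\<theta>. deriv \<Delta> (exp \<theta>) * exp \<theta>)"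
    by (intro ext DERIV_imp_deriv)
  obtain L where L: "(deriv (Lam \<Delta>) has_real_derivative L) (at 0)"
  proof -
    have "(deriv \<Delta> has_real_derivative deriv (deriv \<Delta>) (exp 0)) (at (exp 0))"
      using \<Delta>' by (simp add: DERIV_deriv_iff_real_differentiable)
    from DERIV_mult[OF DERIV_chain2[OF this DERIV_exp] DERIV_exp] show ?thesis
      unfolding deriv_Lam[symmetric] by (rule that)
  qed
  then have second: "(deriv (Lam \<Delta>) has_real_derivative deriv (deriv (Lam \<Delta>)) 0) (at 0)"
    using DERIV_imp_deriv[OF L] by simp
  have first: "(Lam \<Delta> has_real_derivative deriv (Lam \<Delta>) \<theta>) (at \<theta>)" for \<theta>
    using Lam_deriv[of \<theta>] by (simp add: deriv_Lam)
  have "Lam \<Delta> 0 = 0" by (simp add: Lam_def)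
  from second_order_quotient_tendsto[OF first second this] show ?thesis .
qed

lemma pser_partial_sum_ratio_tendsto_0:
  fixes c :: "nat \<Rightarrow> real"
  assumes c_nonneg: "\<And>k. 0 \<le> c k" and summable: "\<And>x. x > 0 \<Longrightarrow> summable (\<lambda>k. c k * x ^ k)"
    and unbounded: "\<not> bdd_above {k. c k > 0}"
  shows "((\<lambda>x. (\<Sum>k<n. c k * x ^ k) / pser c x) \<longlongrightarrow> 0) at_top"
proof -
  obtain m where "n < m" and "c m > 0"
    using unbounded by (metis bdd_above.I mem_Collect_eq not_le_imp_less)
  have "((\<lambda>x. c k * x ^ k / pser c x) \<longlongrightarrow> 0) at_top" if "k < m" for k
  proof (rule Lim_null_comparison)
    show "((\<lambda>x. c k / c m / x ^ (m - k)) \<longlongrightarrow> 0) at_top"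
      using \<open>k < m\<close> by (intro tendsto_divide_0[OF tendsto_const] filterlim_at_top_imp_at_infinity
          filterlim_pow_at_top filterlim_ident) auto
    show "\<forall>\<^sub>F x in at_top. norm (c k * x ^ k / pser c x) \<le> c k / c m / x ^ (m - k)"
      using eventually_gt_at_top[of 0]
    proof eventually_elim
      case (elim x)
      have leading: "c m * x ^ m \<le> pser c x"
        unfolding pser_def using sum_le_suminf[OF summable[OF elim], of "{m}"] c_nonneg elim by simp
      have "0 < c m * x ^ m" using \<open>c m > 0\<close> elim by simp
      then have "norm (c k * x ^ k / pser c x) \<le> c k * x ^ k / (c m * x ^ m)"
        using leading c_nonneg[of k] elim by (simp add: divide_left_mono)
      also have "\<dots> = c k / c m / x ^ (m - k)"
        using \<open>k < m\<close> elim \<open>c m > 0\<close> by (simp add: power_diff field_simps)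
      finally show ?case .
    qed
  qed
  then have "((\<lambda>x. \<Sum>k<n. c k * x ^ k / pser c x) \<longlongrightarrow> (\<Sum>k<n. 0)) at_top"
    using \<open>n < m\<close> by (intro tendsto_sum) auto
  then show ?thesis by (simp add: sum_divide_distrib)
qed

lemma ln_suminf_close:
  fixes g h :: "nat \<Rightarrow> real"
  assumes h: "summable h" and g_nonneg: "\<And>k. 0 \<le> g k"
    and head: "\<And>k. k < n \<Longrightarrow> g k \<le> h k" and tail: "\<And>k. n \<le> k \<Longrightarrow> g k = h k"
    and h_pos: "0 < suminf h" and head_small: "2 * (\<Sum>k<n. h k) \<le> suminf h"
  shows "summable g" and "0 < suminf g" and "\<bar>ln (suminf g) - ln (suminf h)\<bar> \<le> ln 2"
proof -
  have "\<forall>\<^sub>F k in sequentially. g k = h k" using tail by (auto simp: eventually_sequentially)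
  with h show g: "summable g" using summable_cong by blast
  have "suminf g \<le> suminf h"
    using head tail by (intro suminf_le g h) (metis not_le order.refl)
  have "suminf g = (\<Sum>k. g (k + n)) + (\<Sum>k<n. g k)" by (rule suminf_split_initial_segment[OF g])
  also have "(\<Sum>k. g (k + n)) = (\<Sum>k. h (k + n))" using tail by simp
  also have "\<dots> = suminf h - (\<Sum>k<n. h k)" using suminf_split_initial_segment[OF h, of n] by linarith
  finally have "suminf h / 2 \<le> suminf g"
    using head_small sum_nonneg[of "{..<n}" g] g_nonneg by force
  then show "0 < suminf g" using h_pos by linarith
  have "ln (suminf h / 2) \<le> ln (suminf g)" and "ln (suminf g) \<le> ln (suminf h)"
    using \<open>suminf h / 2 \<le> suminf g\<close> \<open>suminf g \<le> suminf h\<close> h_pos by simp_all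
  then show "\<bar>ln (suminf g) - ln (suminf h)\<bar> \<le> ln 2" using h_pos by (simp add: ln_div)
qed

lemma (in prob_space) integral_nat_valued:
  fixes N :: "'a \<Rightarrow> nat" and f :: "nat \<Rightarrow> real"
  assumes N: "N \<in> measurable M (count_space UNIV)" and f_nonneg: "\<And>k. 0 \<le> f k"
    and summable: "summable (\<lambda>k. f k * prob {\<omega> \<in> space M. N \<omega> = k})"
  shows "integrable M (\<lambda>\<omega>. f (N \<omega>))"
    and "(\<integral>\<omega>. f (N \<omega>) \<partial>M) = (\<Sum>k. f k * prob {\<omega> \<in> space M. N \<omega> = k})"
proof -
  let ?p = "\<lambda>k. prob {\<omega> \<in> space M. N \<omega> = k}"
  have fN: "(\<lambda>\<omega>. f (N \<omega>)) \<in> borel_measurable M" using N by measurable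
  have level_sets: "{\<omega> \<in> space M. N \<omega> = k} \<in> sets M" for k using N by measurable
  have pointwise: "ennreal (f (N \<omega>)) = (\<Sum>k. ennreal (f k) * indicator {\<omega> \<in> space M. N \<omega> = k} \<omega>)"
    if "\<omega> \<in> space M" for \<omega>
  proof -
    have "(\<Sum>k. ennreal (f k) * indicator {\<omega> \<in> space M. N \<omega> = k} \<omega>)
        = (\<Sum>k\<in>{N \<omega>}. ennreal (f k) * indicator {\<omega> \<in> space M. N \<omega> = k} \<omega>)"
      by (rule suminf_finite) (auto simp: indicator_def)
    then show ?thesis using that by (simp add: indicator_def)
  qed
  have "(\<integral>\<^sup>+ \<omega>. ennreal (f (N \<omega>)) \<partial>M)
      = (\<integral>\<^sup>+ \<omega>. (\<Sum>k. ennreal (f k) * indicator {\<omega> \<in> space M. N \<omega> = k} \<omega>) \<partial>M)"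
    using pointwise by (intro nn_integral_cong) auto
  also have "\<dots> = (\<Sum>k. \<integral>\<^sup>+ \<omega>. ennreal (f k) * indicator {\<omega> \<in> space M. N \<omega> = k} \<omega> \<partial>M)"
    using level_sets N by (intro nn_integral_suminf) measurable
  also have "\<dots> = (\<Sum>k. ennreal (f k * ?p k))"
    using level_sets by (simp add: nn_integral_cmult_indicator emeasure_eq_measure ennreal_mult f_nonneg)
  also have "\<dots> = ennreal (\<Sum>k. f k * ?p k)"
    using summable f_nonneg by (intro suminf_ennreal2) auto
  finally have nn: "(\<integral>\<^sup>+ \<omega>. ennreal (f (N \<omega>)) \<partial>M) = ennreal (\<Sum>k. f k * ?p k)" .
  show "integrable M (\<lambda>\<omega>. f (N \<omega>))"
    by (rule integrableI_nn_integral_finite[OF fN _ nn]) (simp add: f_nonneg)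
  have "(\<integral>\<omega>. f (N \<omega>) \<partial>M) = enn2real (\<integral>\<^sup>+ \<omega>. ennreal (f (N \<omega>)) \<partial>M)"
    by (rule integral_eq_nn_integral[OF fN]) (simp add: f_nonneg)
  also have "\<dots> = (\<Sum>k. f k * ?p k)"
    unfolding nn using summable f_nonneg by (intro enn2real_ennreal suminf_nonneg) auto
  finally show "(\<integral>\<omega>. f (N \<omega>) \<partial>M) = (\<Sum>k. f k * ?p k)" .
qed

lemma scaled_centred_log_mgf_tendsto:
  fixes \<Lambda> v a E \<psi> :: "real \<Rightarrow> real" and \<mu> :: real
  defines "\<theta> \<equiv> \<lambda>t. \<mu> / sqrt (v t * a t)"
  assumes "\<mu> \<noteq> 0"
    and v_pos: "\<forall>\<^sub>F t in at_top. v t > 0" and a_pos: "\<forall>\<^sub>F t in at_top. a t > 0"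
    and a_lim: "(a \<longlongrightarrow> 0) at_top" and va_lim: "filterlim (\<lambda>t. v t * a t) at_top at_top"
    and quadratic: "((\<lambda>\<theta>. (\<Lambda> \<theta> - \<Lambda>' * \<theta>) / \<theta>\<^sup>2) \<longlongrightarrow> L / 2) (at 0)"
    and centre: "\<forall>\<^sub>F t in at_top. \<bar>(v t * \<Lambda>' - E t) / sqrt (v t)\<bar> \<le> B"
    and approx: "\<forall>\<^sub>F t in at_top. \<bar>\<psi> t - v t * \<Lambda> (\<theta> t)\<bar> \<le> C"
  shows "((\<lambda>t. a t * (\<psi> t - \<theta> t * E t)) \<longlongrightarrow> L * \<mu>\<^sup>2 / 2) at_top"
proof -
  define Q where "Q = (\<lambda>\<theta>. (\<Lambda> \<theta> - \<Lambda>' * \<theta>) / \<theta>\<^sup>2)"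
  have \<theta>_lim: "filterlim \<theta> (at 0) at_top"
  proof (rule filterlim_atI)
    show "(\<theta> \<longlongrightarrow> 0) at_top" unfolding \<theta>_def
      by (intro tendsto_divide_0[OF tendsto_const] filterlim_at_top_imp_at_infinity
          filterlim_compose[OF sqrt_at_top va_lim])
    show "\<forall>\<^sub>F t in at_top. \<theta> t \<noteq> 0"
      using v_pos a_pos by eventually_elim (simp add: \<theta>_def \<open>\<mu> \<noteq> 0\<close>)
  qed
  \<comment> \<open>a v \<theta>^2 = \<mu>^2, so the quadratic part of \<Lambda> contributes exactly \<mu>^2 Q(\<theta>)\<close>
  have decomposition: "\<forall>\<^sub>F t in at_top. a t * (\<psi> t - \<theta> t * E t)
      = \<mu>\<^sup>2 * Q (\<theta> t) + \<mu> * sqrt (a t) * ((v t * \<Lambda>' - E t) / sqrt (v t))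
        + a t * (\<psi> t - v t * \<Lambda> (\<theta> t))"
    using v_pos a_pos
  proof eventually_elim
    case (elim t)
    define sv sa where "sv = sqrt (v t)" and "sa = sqrt (a t)"
    have sv: "sv > 0" "v t = sv * sv" and sa: "sa > 0" "a t = sa * sa"
      using elim by (simp_all add: sv_def sa_def)
    have \<theta>_eq: "\<theta> t = \<mu> / (sv * sa)" by (simp add: \<theta>_def sv_def sa_def real_sqrt_mult)
    have "\<mu>\<^sup>2 * Q (\<theta> t) = a t * v t * (\<Lambda> (\<theta> t) - \<Lambda>' * \<theta> t)"
      using \<open>\<mu> \<noteq> 0\<close> sv sa unfolding Q_def \<theta>_eq by (simp add: power2_eq_square field_simps)
    moreover have "\<mu> * sqrt (a t) * ((v t * \<Lambda>' - E t) / sqrt (v t)) = a t * \<theta> t * (v t * \<Lambda>' - E t)"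
      using sv sa unfolding \<theta>_eq sv_def[symmetric] sa_def[symmetric] by (simp add: field_simps)
    ultimately show ?case by (simp add: algebra_simps)
  qed
  have "((\<lambda>t. \<mu>\<^sup>2 * Q (\<theta> t)) \<longlongrightarrow> \<mu>\<^sup>2 * (L / 2)) at_top"
    using quadratic unfolding Q_def[symmetric] by (intro tendsto_mult tendsto_const filterlim_compose[OF _ \<theta>_lim])
  moreover have "((\<lambda>t. \<mu> * sqrt (a t) * ((v t * \<Lambda>' - E t) / sqrt (v t))) \<longlongrightarrow> 0) at_top"
  proof (rule Lim_null_comparison)
    show "\<forall>\<^sub>F t in at_top. norm (\<mu> * sqrt (a t) * ((v t * \<Lambda>' - E t) / sqrt (v t))) \<le> \<bar>\<mu>\<bar> * sqrt (a t) * B"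
      using centre a_pos
    proof eventually_elim
      case (elim t)
      then have "\<bar>\<mu>\<bar> * sqrt (a t) * \<bar>(v t * \<Lambda>' - E t) / sqrt (v t)\<bar> \<le> \<bar>\<mu>\<bar> * sqrt (a t) * B"
        by (intro mult_left_mono) auto
      moreover have "0 \<le> sqrt (a t)" using elim by simp
      ultimately show ?case by (simp add: abs_mult)
    qed
    show "((\<lambda>t. \<bar>\<mu>\<bar> * sqrt (a t) * B) \<longlongrightarrow> 0) at_top"
      using tendsto_mult[OF tendsto_mult[OF tendsto_const tendsto_real_sqrt[OF a_lim]] tendsto_const] by simp
  qed
  moreover have "((\<lambda>t. a t * (\<psi> t - v t * \<Lambda> (\<theta> t))) \<longlongrightarrow> 0) at_top"
  proof (rule Lim_null_comparison)
    show "\<forall>\<^sub>F t in at_top. norm (a t * (\<psi> t - v t * \<Lambda> (\<theta> t))) \<le> a t * C"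
      using approx a_pos by eventually_elim (simp add: abs_mult mult_left_mono)
    show "((\<lambda>t. a t * C) \<longlongrightarrow> 0) at_top"
      using tendsto_mult[OF a_lim tendsto_const] by simp
  qed
  ultimately have "((\<lambda>t. \<mu>\<^sup>2 * Q (\<theta> t) + \<mu> * sqrt (a t) * ((v t * \<Lambda>' - E t) / sqrt (v t))
        + a t * (\<psi> t - v t * \<Lambda> (\<theta> t))) \<longlongrightarrow> \<mu>\<^sup>2 * (L / 2) + 0 + 0) at_top"
    by (intro tendsto_add)
  then have "((\<lambda>t. \<mu>\<^sup>2 * Q (\<theta> t) + \<mu> * sqrt (a t) * ((v t * \<Lambda>' - E t) / sqrt (v t))
        + a t * (\<psi> t - v t * \<Lambda> (\<theta> t))) \<longlongrightarrow> L * \<mu>\<^sup>2 / 2) at_top"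
    by (simp add: mult.commute)
  then show ?thesis
    by (rule Lim_transform_eventually) (use decomposition in \<open>auto elim: eventually_mono\<close>)
qed

section \<open>The count model\<close>

text \<open>D, w and EN are parameters so that the local definitions of the main theorem can be passed
  in directly. D and w are pinned down by D_eq and w_eq, whereas EN need not be the mean of N:
  it enters only through H3.\<close>

locale power_series_count_model = prob_space M
  for M :: "'a measure" +
  fixes d :: "nat \<Rightarrow> nat \<Rightarrow> real" and \<delta>j :: "nat \<Rightarrow> real \<Rightarrow> real" and N :: "real \<Rightarrow> 'a \<Rightarrow> nat"
    and n :: nat and dd :: "nat \<Rightarrow> real" and \<delta> v \<Delta> a :: "real \<Rightarrow> real"
    and D :: "real \<Rightarrow> real" and w :: "nat \<Rightarrow> real \<Rightarrow> real" and EN :: "real \<Rightarrow> real"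
  assumes D_eq: "D = pser dd"
    and w_eq: "w = (\<lambda>j t. d j j * (\<delta>j j t) ^ j / pser (\<lambda>k. d k j) (\<delta>j j t))"
    and d_nonneg: "\<And>k j. 0 \<le> d k j"
    and Dj_fin: "\<And>j x. x > 0 \<Longrightarrow> summable (\<lambda>k. d k j * x ^ k) \<and> pser (\<lambda>k. d k j) x > 0"
    and \<delta>j_pos: "\<And>j t. t \<ge> 0 \<Longrightarrow> \<delta>j j t > 0"
    and \<delta>j_lim: "\<And>j. filterlim (\<delta>j j) at_top at_top"
    and N_meas: "\<And>t. t \<ge> 0 \<Longrightarrow> N t \<in> measurable M (count_space UNIV)"
    and N_dist: "\<And>t k. t \<ge> 0 \<Longrightarrow> prob {\<omega> \<in> space M. N t \<omega> = k} = w k t / (\<Sum>j. w j t)"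
    and B1_d: "\<And>j k. j \<ge> n \<Longrightarrow> d k j = dd k"
    and B1_\<delta>: "\<And>j. j \<ge> n \<Longrightarrow> \<delta>j j = \<delta>"
    and v_pos: "\<And>x. x > 0 \<Longrightarrow> v x > 0"
    and \<Delta>_diff: "\<And>u. u > 0 \<Longrightarrow> \<Delta> differentiable (at u)"
    and B2: "\<not> bdd_above {k. d k k > 0}"
    and B3: "\<And>k. k < n \<Longrightarrow>
          (dd k > 0 \<longrightarrow> ((\<lambda>t. w k t / (dd k * (\<delta> t) ^ k / D (\<delta> t))) \<longlongrightarrow> 0) at_top)
          \<and> (dd k = 0 \<longrightarrow> d k k = 0)"
    and \<Delta>'_diff: "deriv \<Delta> differentiable (at 1)"
    and H1: "\<And>u. (\<forall>t\<ge>0. u t > 0) \<Longrightarrow> (u \<longlongrightarrow> 1) at_top \<Longrightarrow>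
          \<exists>B. \<forall>t\<ge>0. \<bar>ln (D (u t * \<delta> t) / D (\<delta> t)) - v (\<delta> t) * (\<Delta> (u t) - \<Delta> 1)\<bar> \<le> B"
    and H2: "\<exists>B. \<forall>t\<ge>0. \<bar>sqrt (v (\<delta> t)) *
          (deriv (Lam \<Delta>) 0 - \<delta> t * deriv D (\<delta> t) / (v (\<delta> t) * D (\<delta> t)))\<bar> \<le> B"
    and H3: "\<exists>B. \<forall>t\<ge>0. \<bar>(\<delta> t * deriv D (\<delta> t) / D (\<delta> t) - EN t) / sqrt (v (\<delta> t))\<bar> \<le> B"
    and a_pos: "\<And>t. t > 0 \<Longrightarrow> a t > 0"
    and a_lim: "(a \<longlongrightarrow> 0) at_top"
    and va_lim: "filterlim (\<lambda>t. v (\<delta> t) * a t) at_top at_top"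
begin

lemma dd_nonneg: "0 \<le> dd k"
  using d_nonneg[of k n] B1_d[of n k] by simp

lemma D_summable_pos:
  assumes "x > 0"
  shows "summable (\<lambda>k. dd k * x ^ k)" and "D x > 0"
  using Dj_fin[OF assms, of n] B1_d[of n] by (simp_all add: D_eq)

lemma dd_unbounded: "\<not> bdd_above {k. dd k > 0}"
proof
  assume "bdd_above {k. dd k > 0}"
  then obtain b where "\<And>k. dd k > 0 \<Longrightarrow> k \<le> b" by (auto simp: bdd_above_def)
  then have "k \<le> max b n" if "d k k > 0" for k
    using that B1_d[of k k] by (cases "n \<le> k") (auto simp: le_max_iff_disj)
  then show False using B2 by (auto simp: bdd_above_def)
qed

lemma \<delta>_pos: "t \<ge> 0 \<Longrightarrow> \<delta> t > 0"
  using \<delta>j_pos[of t n] B1_\<delta>[of n] by simp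

lemma \<delta>_tendsto: "filterlim \<delta> at_top at_top"
  using \<delta>j_lim[of n] B1_\<delta>[of n] by simp

lemma w_tail: "n \<le> k \<Longrightarrow> w k t = dd k * \<delta> t ^ k / D (\<delta> t)"
  using B1_d[of k] B1_\<delta>[of k] by (simp add: w_eq D_eq)

lemma w_nonneg:
  assumes "t \<ge> 0"
  shows "0 \<le> w k t"
proof -
  have "pser (\<lambda>i. d i k) (\<delta>j k t) > 0" using Dj_fin \<delta>j_pos[OF assms] by blast
  then show ?thesis using d_nonneg[of k k] \<delta>j_pos[OF assms, of k] by (simp add: w_eq)
qed

lemma eventually_w_head_le: "\<forall>\<^sub>F t in at_top. \<forall>k<n. w k t \<le> dd k * \<delta> t ^ k / D (\<delta> t)"
proof -
  have "\<forall>\<^sub>F t in at_top. w k t \<le> dd k * \<delta> t ^ k / D (\<delta> t)" if "k < n" for k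
  proof (cases "dd k > 0")
    case True
    with B3[OF \<open>k < n\<close>] have "\<forall>\<^sub>F t in at_top. w k t / (dd k * \<delta> t ^ k / D (\<delta> t)) < 1"
      by (intro order_tendstoD) auto
    with eventually_ge_at_top[of 0] show ?thesis
    proof eventually_elim
      case (elim t)
      have "0 < dd k * \<delta> t ^ k / D (\<delta> t)"
        using True \<delta>_pos[OF elim(1)] D_summable_pos(2)[OF \<delta>_pos[OF elim(1)]] by simp
      with elim(2) show ?case by (metis divide_less_eq_1_pos less_imp_le)
    qed
  next
    case False
    then have "dd k = 0" and "d k k = 0" using B3[OF \<open>k < n\<close>] dd_nonneg[of k] by auto
    then show ?thesis by (simp add: w_eq)
  qed
  then have "\<forall>\<^sub>F t in at_top. \<forall>k\<in>{..<n}. w k t \<le> dd k * \<delta> t ^ k / D (\<delta> t)"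
    by (intro eventually_ball_finite) auto
  then show ?thesis by (rule eventually_mono) auto
qed

lemma ln_weighted_sum_close:
  assumes t: "t \<ge> 0" and head: "\<forall>k<n. w k t \<le> dd k * \<delta> t ^ k / D (\<delta> t)"
    and head_small: "2 * (\<Sum>k<n. dd k * (exp \<theta> * \<delta> t) ^ k) \<le> D (exp \<theta> * \<delta> t)"
  shows "summable (\<lambda>k. w k t * exp (\<theta> * k))" and "0 < (\<Sum>k. w k t * exp (\<theta> * k))"
    and "\<bar>ln (\<Sum>k. w k t * exp (\<theta> * k)) - ln (D (exp \<theta> * \<delta> t) / D (\<delta> t))\<bar> \<le> ln 2"
proof -
  let ?y = "exp \<theta> * \<delta> t"
  let ?h = "\<lambda>k. dd k * ?y ^ k / D (\<delta> t)"
  have y: "?y > 0" and D\<delta>: "D (\<delta> t) > 0" using \<delta>_pos[OF t] D_summable_pos(2) by auto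
  have exp_k: "exp (\<theta> * k) = exp \<theta> ^ k" for k :: nat by (simp add: exp_of_nat_mult[symmetric] mult.commute)
  have h: "summable ?h" using D_summable_pos(1)[OF y] by (rule summable_divide)
  have sum_h: "suminf ?h = D ?y / D (\<delta> t)"
    using suminf_divide[OF D_summable_pos(1)[OF y]] by (simp add: D_eq pser_def)
  have nonneg: "0 \<le> w k t * exp (\<theta> * k)" for k using w_nonneg[OF t] by simp
  have head': "w k t * exp (\<theta> * k) \<le> ?h k" if "k < n" for k
  proof -
    have "w k t * exp (\<theta> * k) \<le> dd k * \<delta> t ^ k / D (\<delta> t) * exp (\<theta> * k)"
      using head that by (intro mult_right_mono) auto
    also have "\<dots> = ?h k" by (simp add: exp_k power_mult_distrib ac_simps)
    finally show ?thesis .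
  qed
  have tail: "w k t * exp (\<theta> * k) = ?h k" if "n \<le> k" for k
    using w_tail[OF that] by (simp add: exp_k power_mult_distrib)
  have pos: "0 < suminf ?h" using D_summable_pos(2)[OF y] D\<delta> by (simp add: sum_h)
  have small: "2 * (\<Sum>k<n. ?h k) \<le> suminf ?h"
    using head_small D\<delta> by (simp add: sum_h sum_divide_distrib[symmetric] divide_right_mono)
  note close = ln_suminf_close[OF h nonneg head' tail pos small]
  show "summable (\<lambda>k. w k t * exp (\<theta> * k))" and "0 < (\<Sum>k. w k t * exp (\<theta> * k))"
    using close(1,2) by blast+
  show "\<bar>ln (\<Sum>k. w k t * exp (\<theta> * k)) - ln (D ?y / D (\<delta> t))\<bar> \<le> ln 2"
    using close(3) unfolding sum_h by blast
qed

lemma ln_mgf_N_close: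
  assumes t: "t \<ge> 0" and head: "\<forall>k<n. w k t \<le> dd k * \<delta> t ^ k / D (\<delta> t)"
    and head_small_\<theta>: "2 * (\<Sum>k<n. dd k * (exp \<theta> * \<delta> t) ^ k) \<le> D (exp \<theta> * \<delta> t)"
    and head_small: "2 * (\<Sum>k<n. dd k * \<delta> t ^ k) \<le> D (\<delta> t)"
  shows "integrable M (\<lambda>\<omega>. exp (\<theta> * real (N t \<omega>)))"
    and "\<bar>ln (\<integral>\<omega>. exp (\<theta> * real (N t \<omega>)) \<partial>M) - ln (D (exp \<theta> * \<delta> t) / D (\<delta> t))\<bar> \<le> 2 * ln 2"
proof -
  let ?G = "\<Sum>k. w k t * exp (\<theta> * k)" and ?W = "\<Sum>k. w k t"
  note G = ln_weighted_sum_close[OF t head head_small_\<theta>]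
  note W = ln_weighted_sum_close[OF t head, of 0]
  have W_pos: "0 < ?W" and ln_W: "\<bar>ln ?W\<bar> \<le> ln 2"
    using W head_small D_summable_pos(2)[OF \<delta>_pos[OF t]] by auto
  have masses: "exp (\<theta> * k) * prob {\<omega> \<in> space M. N t \<omega> = k} = w k t * exp (\<theta> * k) / ?W" for k
    using N_dist[OF t] by simp
  note mgf = integral_nat_valued[OF N_meas[OF t], of "\<lambda>k. exp (\<theta> * k)"]
  show "integrable M (\<lambda>\<omega>. exp (\<theta> * real (N t \<omega>)))"
    using mgf(1) G(1) unfolding masses by (simp add: summable_divide)
  have "(\<integral>\<omega>. exp (\<theta> * real (N t \<omega>)) \<partial>M) = ?G / ?W"
    using mgf(2) G(1) unfolding masses by (simp add: summable_divide suminf_divide)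
  then have "ln (\<integral>\<omega>. exp (\<theta> * real (N t \<omega>)) \<partial>M) = ln ?G - ln ?W"
    using G(2) W_pos by (simp add: ln_div)
  then show "\<bar>ln (\<integral>\<omega>. exp (\<theta> * real (N t \<omega>)) \<partial>M) - ln (D (exp \<theta> * \<delta> t) / D (\<delta> t))\<bar> \<le> 2 * ln 2"
    using G(3) ln_W by linarith
qed

lemma eventually_ln_mgf_N_close:
  fixes \<theta> :: "real \<Rightarrow> real"
  assumes \<theta>: "(\<theta> \<longlongrightarrow> 0) at_top"
  shows "\<forall>\<^sub>F t in at_top. integrable M (\<lambda>\<omega>. exp (\<theta> t * real (N t \<omega>))) \<and>
      \<bar>ln (\<integral>\<omega>. exp (\<theta> t * real (N t \<omega>)) \<partial>M) - ln (D (exp (\<theta> t) * \<delta> t) / D (\<delta> t))\<bar> \<le> 2 * ln 2"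
proof -
  have head_ratio: "((\<lambda>x. (\<Sum>k<n. dd k * x ^ k) / D x) \<longlongrightarrow> 0) at_top"
    unfolding D_eq using dd_nonneg D_summable_pos(1) dd_unbounded by (rule pser_partial_sum_ratio_tendsto_0)
  have "filterlim (\<lambda>t. exp (\<theta> t) * \<delta> t) at_top at_top"
    using tendsto_exp[OF \<theta>] by (intro filterlim_tendsto_pos_mult_at_top[OF _ _ \<delta>_tendsto]) auto
  then have "\<forall>\<^sub>F t in at_top. (\<Sum>k<n. dd k * (exp (\<theta> t) * \<delta> t) ^ k) / D (exp (\<theta> t) * \<delta> t) < 1 / 2"
    using filterlim_compose[OF head_ratio] by (intro order_tendstoD) auto
  moreover have "\<forall>\<^sub>F t in at_top. (\<Sum>k<n. dd k * \<delta> t ^ k) / D (\<delta> t) < 1 / 2"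
    using filterlim_compose[OF head_ratio \<delta>_tendsto] by (intro order_tendstoD) auto
  ultimately show ?thesis using eventually_w_head_le eventually_ge_at_top[of 0]
  proof eventually_elim
    case (elim t)
    have "0 < D (exp (\<theta> t) * \<delta> t)" and "0 < D (\<delta> t)"
      using \<delta>_pos[OF elim(4)] D_summable_pos(2) by simp_all
    then show ?case
      using ln_mgf_N_close[OF elim(4,3)] elim(1,2) by (simp add: divide_less_eq)
  qed
qed

lemma eventually_centring_bounded:
  obtains B where "\<forall>\<^sub>F t in at_top. \<bar>(v (\<delta> t) * deriv (Lam \<Delta>) 0 - EN t) / sqrt (v (\<delta> t))\<bar> \<le> B"
proof -
  obtain B2 where B2: "\<forall>t\<ge>0. \<bar>sqrt (v (\<delta> t)) *
      (deriv (Lam \<Delta>) 0 - \<delta> t * deriv D (\<delta> t) / (v (\<delta> t) * D (\<delta> t)))\<bar> \<le> B2"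
    using H2 by blast
  obtain B3 where B3: "\<forall>t\<ge>0. \<bar>(\<delta> t * deriv D (\<delta> t) / D (\<delta> t) - EN t) / sqrt (v (\<delta> t))\<bar> \<le> B3"
    using H3 by blast
  have "\<forall>\<^sub>F t in at_top. \<bar>(v (\<delta> t) * deriv (Lam \<Delta>) 0 - EN t) / sqrt (v (\<delta> t))\<bar> \<le> B2 + B3"
    using eventually_ge_at_top[of 0]
  proof eventually_elim
    case (elim t)
    define sv where "sv = sqrt (v (\<delta> t))"
    have sv: "sv > 0" "v (\<delta> t) = sv * sv" using v_pos[OF \<delta>_pos[OF elim]] by (simp_all add: sv_def)
    define A where "A = sqrt (v (\<delta> t)) *
      (deriv (Lam \<Delta>) 0 - \<delta> t * deriv D (\<delta> t) / (v (\<delta> t) * D (\<delta> t)))"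
    define B where "B = (\<delta> t * deriv D (\<delta> t) / D (\<delta> t) - EN t) / sqrt (v (\<delta> t))"
    have "D (\<delta> t) > 0" using D_summable_pos(2)[OF \<delta>_pos[OF elim]] .
    then have split: "(v (\<delta> t) * deriv (Lam \<Delta>) 0 - EN t) / sqrt (v (\<delta> t)) = A + B"
      using sv unfolding A_def B_def sv_def[symmetric] by (simp add: field_simps)
    have "\<bar>A\<bar> \<le> B2" and "\<bar>B\<bar> \<le> B3" using B2 B3 elim by (simp_all add: A_def B_def)
    then have "\<bar>A + B\<bar> \<le> B2 + B3" using abs_triangle_ineq[of A B] by linarith
    then show ?case unfolding split .
  qed
  then show thesis by (rule that)
qed

lemma quadratic_log_mgf_centred_N:
  "quadratic_log_mgf M (\<lambda>t \<omega>. (real (N t \<omega>) - EN t) / v (\<delta> t) * sqrt (v (\<delta> t) * a t)) a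
     (deriv (deriv (Lam \<Delta>)) 0)"
proof (intro quadratic_log_mgf.intro quadratic_log_mgf_axioms.intro)
  show "prob_space M" by (rule prob_space_axioms)
  let ?X = "\<lambda>t \<omega>. (real (N t \<omega>) - EN t) / v (\<delta> t) * sqrt (v (\<delta> t) * a t)"
  show "\<forall>\<^sub>F t in at_top. ?X t \<in> borel_measurable M"
    using eventually_ge_at_top[of 0] by eventually_elim (use N_meas in measurable)
  show a: "\<forall>\<^sub>F t in at_top. a t > 0"
    using eventually_gt_at_top[of 0] by eventually_elim (rule a_pos)
  show "(a \<longlongrightarrow> 0) at_top" by (rule a_lim)
  fix \<mu> :: real
  define \<theta> where "\<theta> = (\<lambda>t. \<mu> / sqrt (v (\<delta> t) * a t))"
  have v: "\<forall>\<^sub>F t in at_top. v (\<delta> t) > 0"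
    using eventually_ge_at_top[of 0] by eventually_elim (simp add: v_pos \<delta>_pos)
  have mgf_X: "\<forall>\<^sub>F t in at_top.
      (\<lambda>\<omega>. exp (\<mu> * ?X t \<omega> / a t)) = (\<lambda>\<omega>. exp (- \<theta> t * EN t) * exp (\<theta> t * real (N t \<omega>)))"
    using v a
  proof eventually_elim
    case (elim t)
    define p where "p = v (\<delta> t) * a t"
    have "p > 0" using elim by (simp add: p_def)
    then have sqrt_p: "sqrt p / p = 1 / sqrt p" by (simp add: field_simps)
    have "\<mu> * ?X t \<omega> / a t = - \<theta> t * EN t + \<theta> t * real (N t \<omega>)" for \<omega>
    proof -
      have "\<mu> * ?X t \<omega> / a t = \<mu> * (real (N t \<omega>) - EN t) * (sqrt p / p)"
        by (simp add: p_def)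
      also have "\<dots> = - \<theta> t * EN t + \<theta> t * real (N t \<omega>)"
        unfolding sqrt_p by (simp add: \<theta>_def p_def algebra_simps)
      finally show ?thesis .
    qed
    then show ?case by (simp add: exp_add[symmetric])
  qed
  have "(\<theta> \<longlongrightarrow> 0) at_top" unfolding \<theta>_def
    by (intro tendsto_divide_0[OF tendsto_const] filterlim_at_top_imp_at_infinity
        filterlim_compose[OF sqrt_at_top va_lim])
  note mgf_N = eventually_ln_mgf_N_close[OF this]
  show "\<forall>\<^sub>F t in at_top. integrable M (\<lambda>\<omega>. exp (\<mu> * ?X t \<omega> / a t))"
    using mgf_X mgf_N by eventually_elim simp
  show "((\<lambda>t. a t * ln (\<integral>\<omega>. exp (\<mu> * ?X t \<omega> / a t) \<partial>M)) \<longlongrightarrow> deriv (deriv (Lam \<Delta>)) 0 * \<mu>\<^sup>2 / 2) at_top"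
  proof (cases "\<mu> = 0")
    case True
    then show ?thesis by (simp add: prob_space)
  next
    case False
    define \<psi> where "\<psi> = (\<lambda>t. ln (\<integral>\<omega>. exp (\<theta> t * real (N t \<omega>)) \<partial>M))"
    obtain B where centre: "\<forall>\<^sub>F t in at_top. \<bar>(v (\<delta> t) * deriv (Lam \<Delta>) 0 - EN t) / sqrt (v (\<delta> t))\<bar> \<le> B"
      by (rule eventually_centring_bounded)
    obtain B1 where B1: "\<forall>t\<ge>0. \<bar>ln (D (exp (\<theta> t) * \<delta> t) / D (\<delta> t)) - v (\<delta> t) * (\<Delta> (exp (\<theta> t)) - \<Delta> 1)\<bar> \<le> B1"
      using H1[of "\<lambda>t. exp (\<theta> t)"] tendsto_exp[OF \<open>(\<theta> \<longlongrightarrow> 0) at_top\<close>] by auto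
    have approx: "\<forall>\<^sub>F t in at_top. \<bar>\<psi> t - v (\<delta> t) * Lam \<Delta> (\<theta> t)\<bar> \<le> 2 * ln 2 + B1"
      using mgf_N eventually_ge_at_top[of 0]
    proof eventually_elim
      case (elim t)
      have "\<bar>\<psi> t - ln (D (exp (\<theta> t) * \<delta> t) / D (\<delta> t))\<bar> \<le> 2 * ln 2"
        using elim(1) by (simp add: \<psi>_def)
      moreover have "\<bar>ln (D (exp (\<theta> t) * \<delta> t) / D (\<delta> t)) - v (\<delta> t) * Lam \<Delta> (\<theta> t)\<bar> \<le> B1"
        using B1 elim(2) by (simp add: Lam_def)
      ultimately show ?case by linarith
    qed
    have "((\<lambda>t. a t * (\<psi> t - \<theta> t * EN t)) \<longlongrightarrow> deriv (deriv (Lam \<Delta>)) 0 * \<mu>\<^sup>2 / 2) at_top"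
      using scaled_centred_log_mgf_tendsto[where v = "\<lambda>t. v (\<delta> t)" and \<Lambda> = "Lam \<Delta>"
          and \<Lambda>' = "deriv (Lam \<Delta>) 0" and L = "deriv (deriv (Lam \<Delta>)) 0" and E = EN,
          OF False v a a_lim va_lim Lam_quotient_tendsto[OF \<Delta>_diff \<Delta>'_diff] centre]
        approx unfolding \<theta>_def by blast
    moreover have "\<forall>\<^sub>F t in at_top. a t * (\<psi> t - \<theta> t * EN t) = a t * ln (\<integral>\<omega>. exp (\<mu> * ?X t \<omega> / a t) \<partial>M)"
      using mgf_X mgf_N
    proof eventually_elim
      case (elim t)
      then have "0 < (\<integral>\<omega>. exp (\<theta> t * real (N t \<omega>)) \<partial>M)" by (intro expectation_greater) auto
      then show ?case using elim(1) by (simp add: \<psi>_def ln_mult)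
    qed
    ultimately show ?thesis by (rule Lim_transform_eventually)
  qed
qed

end

theorem proposition3p2:
  fixes d :: "nat \<Rightarrow> nat \<Rightarrow> real"
    and \<delta>j :: "nat \<Rightarrow> real \<Rightarrow> real"
    and M :: "'a measure"
    and N :: "real \<Rightarrow> 'a \<Rightarrow> nat"
    and n :: nat
    and dd :: "nat \<Rightarrow> real"
    and \<delta> :: "real \<Rightarrow> real"
    and v :: "real \<Rightarrow> real"
    and \<Delta> :: "real \<Rightarrow> real"
    and a :: "real \<Rightarrow> real"
  defines "Dj \<equiv> (\<lambda>j. pser (\<lambda>k. d k j))"
    and "D \<equiv> pser dd"
    and "w \<equiv> (\<lambda>j t. d j j * (\<delta>j j t) ^ j / pser (\<lambda>k. d k j) (\<delta>j j t))"
    and "EN \<equiv> (\<lambda>t. integral\<^sup>L M (\<lambda>\<omega>. real (N t \<omega>)))"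
  assumes d_nonneg: "\<And>k j. 0 \<le> d k j"
    and Dj_fin: "\<And>j x. x > 0 \<Longrightarrow> summable (\<lambda>k. d k j * x ^ k) \<and> Dj j x > 0"
    and \<delta>j_pos: "\<And>j t. t \<ge> 0 \<Longrightarrow> \<delta>j j t > 0"
    and \<delta>j_lim: "\<And>j. filterlim (\<delta>j j) at_top at_top"
    and wsum_fin: "\<And>x. x > 0 \<Longrightarrow>
          summable (\<lambda>j. d j j * x ^ j / Dj j x) \<and> (\<Sum>j. d j j * x ^ j / Dj j x) > 0"
    and M_prob: "prob_space M"
    and N_meas: "\<And>t. t \<ge> 0 \<Longrightarrow> N t \<in> measurable M (count_space UNIV)"
    and N_dist: "\<And>t k. t \<ge> 0 \<Longrightarrow>
          measure M {\<omega> \<in> space M. N t \<omega> = k} = w k t / (\<Sum>j. w j t)"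
    and B1_d: "\<And>j k. j \<ge> n \<Longrightarrow> d k j = dd k"
    and B1_\<delta>: "\<And>j. j \<ge> n \<Longrightarrow> \<delta>j j = \<delta>"
    and B1_v_pos: "\<And>x. x > 0 \<Longrightarrow> v x > 0"
    and B1_v_lim: "filterlim v at_top at_top"
    and B1_\<Delta>_diff: "\<And>u. u > 0 \<Longrightarrow> \<Delta> differentiable (at u)"
    and B1_lim: "\<And>u. u > 0 \<Longrightarrow> ((\<lambda>t. ln (D (u * t)) / v t) \<longlongrightarrow> \<Delta> u) at_top"
    and B2: "\<not> bdd_above {k. d k k > 0}"
    and B3: "\<And>k. k < n \<Longrightarrow>
          (dd k > 0 \<longrightarrow>
             ((\<lambda>t. w k t / (dd k * (\<delta> t) ^ k / D (\<delta> t))) \<longlongrightarrow> 0) at_top)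
          \<and> (dd k = 0 \<longrightarrow> d k k = 0)"
    and \<Delta>2: "deriv \<Delta> differentiable (at 1)"
    and H1: "\<And>u. (\<forall>t\<ge>0. u t > 0) \<Longrightarrow> (u \<longlongrightarrow> 1) at_top \<Longrightarrow>
          \<exists>B. \<forall>t\<ge>0. \<bar>ln (D (u t * \<delta> t) / D (\<delta> t)) - v (\<delta> t) * (\<Delta> (u t) - \<Delta> 1)\<bar> \<le> B"
    and H2: "\<exists>B. \<forall>t\<ge>0. \<bar>sqrt (v (\<delta> t)) *
          (deriv (Lam \<Delta>) 0 - \<delta> t * deriv D (\<delta> t) / (v (\<delta> t) * D (\<delta> t)))\<bar> \<le> B"
    and EN_fin: "\<And>t. t \<ge> 0 \<Longrightarrow> integrable M (\<lambda>\<omega>. real (N t \<omega>))"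
    and H3: "\<exists>B. \<forall>t\<ge>0. \<bar>(\<delta> t * deriv D (\<delta> t) / D (\<delta> t) - EN t) / sqrt (v (\<delta> t))\<bar> \<le> B"
    and a_pos: "\<And>t. t > 0 \<Longrightarrow> a t > 0"
    and a_lim: "(a \<longlongrightarrow> 0) at_top"
    and va_lim: "filterlim (\<lambda>t. v (\<delta> t) * a t) at_top at_top"
  shows "let X = (\<lambda>t \<omega>. (real (N t \<omega>) - EN t) / v (\<delta> t) * sqrt (v (\<delta> t) * a t));
             s = (\<lambda>t. 1 / a t);
             L2 = deriv (deriv (Lam \<Delta>)) 0
         in (L2 > 0 \<longrightarrow> LDP M X s (rate_pos L2) \<and> good_rate_function (rate_pos L2))
          \<and> (L2 = 0 \<longrightarrow> LDP M X s rate_zero \<and> good_rate_function rate_zero)"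
proof -
  interpret power_series_count_model M d \<delta>j N n dd \<delta> v \<Delta> a D w EN
    by (rule power_series_count_model.intro[OF M_prob], unfold_locales)
      (fact D_def[THEN meta_eq_to_obj_eq] w_def[THEN meta_eq_to_obj_eq] assms[unfolded Dj_def])+
  note limit = quadratic_log_mgf_centred_N
  show ?thesis
    unfolding Let_def
    by (intro conjI impI quadratic_log_mgf.LDP_rate_pos[OF limit] quadratic_log_mgf.LDP_rate_zero[OF limit]
        good_rate_function_rate_pos good_rate_function_rate_zero)
qed

end
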